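(* Let $G$ be a connected topological group and $\Gamma$ a dense subgroup of $G$. Let $H_1,\dots,H_n$ be subgroups of $\Gamma$ none of which is dense in $G$, and let $X=\bigcup_{i=1}^n a_iH_i$ with $a_i\in\Gamma$ be a finite union of cosets of the $H_i$. Then $\Gamma\setminus X$ is dense in $G$. *)

theory Defs
  imports "HOL-Analysis.Analysis" "HOL-Algebra.Coset"
begin

definition topological_group :: "('a, 'b) monoid_scheme \<Rightarrow> 'a topology \<Rightarrow> bool" where
  "topological_group G T \<longleftrightarrow> group G \<and> topspace T = carrier G \<and>
     continuous_map (prod_topology T T) T (\<lambda>(x, y). x \<otimes>\<^bsub>G\<^esub> y) \<and>
     continuous_map T T (\<lambda>x. inv\<^bsub>G\<^esub> x)"

definition dense_in :: "'a topology \<Rightarrow> 'a set \<Rightarrow> bool" where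
  "dense_in T S \<longleftrightarrow> S \<subseteq> topspace T \<and> T closure_of S = topspace T"

end

theory Submission
  imports Defs
begin

text \<open>Left translations are homeomorphisms, so the closure \<open>C\<close> of a subgroup \<open>H\<close> and its
  interior \<open>I\<close> are invariant under left translation by \<open>H\<close>. If \<open>I\<close> is nonempty it meets \<open>H\<close>,
  hence contains the identity; then every \<open>x \<in> C\<close> lies in some \<open>h I = I\<close> with \<open>h \<in> H\<close> close
  to \<open>x\<close>. So \<open>C = I\<close> is clopen, and by connectedness \<open>H\<close> is dense. Hence closures of cosets of
  non-dense subgroups are nowhere dense, so is a finite union of them, and removing a nowhere
  dense set from a dense set leaves a dense set.\<close>

lemma topological_group_group: "topological_group G T \<Longrightarrow> group G"
  by (simp add: topological_group_def)

lemma topspace_topological_group: "topological_group G T \<Longrightarrow> topspace T = carrier G"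
  by (simp add: topological_group_def)

lemma closure_of_subset_carrier: "topological_group G T \<Longrightarrow> T closure_of S \<subseteq> carrier G"
  using closure_of_subset_topspace topspace_topological_group by metis

lemma continuous_map_topological_group_mult:
  assumes "topological_group G T" and "continuous_map T T f" and "continuous_map T T g"
  shows "continuous_map T T (\<lambda>x. f x \<otimes>\<^bsub>G\<^esub> g x)"
proof -
  have "continuous_map (prod_topology T T) T (\<lambda>(x, y). x \<otimes>\<^bsub>G\<^esub> y)"
    using assms(1) by (simp add: topological_group_def)
  from continuous_map_compose[OF continuous_map_pairedI[OF assms(2,3)] this]
  show ?thesis by (simp add: o_def)
qed

lemma continuous_map_topological_group_inv:
  assumes "topological_group G T" and "continuous_map T T f"
  shows "continuous_map T T (\<lambda>x. inv\<^bsub>G\<^esub> f x)"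
proof -
  have "continuous_map T T (\<lambda>x. inv\<^bsub>G\<^esub> x)"
    using assms(1) by (simp add: topological_group_def)
  from continuous_map_compose[OF assms(2) this] show ?thesis by (simp add: o_def)
qed

lemma continuous_map_left_translation:
  assumes "topological_group G T" and "g \<in> carrier G"
  shows "continuous_map T T (\<lambda>x. g \<otimes>\<^bsub>G\<^esub> x)"
  using assms by (intro continuous_map_topological_group_mult)
    (auto simp: topspace_topological_group)

lemma homeomorphic_map_left_translation:
  assumes tg: "topological_group G T" and g: "g \<in> carrier G"
  shows "homeomorphic_map T T (\<lambda>x. g \<otimes>\<^bsub>G\<^esub> x)"
proof -
  interpret group G using topological_group_group[OF tg] .
  have "homeomorphic_maps T T (\<lambda>x. g \<otimes>\<^bsub>G\<^esub> x) (\<lambda>x. inv\<^bsub>G\<^esub> g \<otimes>\<^bsub>G\<^esub> x)"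
    using g by (auto simp: homeomorphic_maps_def topspace_topological_group[OF tg]
        continuous_map_left_translation[OF tg] m_assoc[symmetric])
  then show ?thesis
    by (auto simp: homeomorphic_map_maps)
qed

lemma l_coset_eq_image: "a <#\<^bsub>G\<^esub> S = (\<lambda>x. a \<otimes>\<^bsub>G\<^esub> x) ` S"
  by (auto simp: l_coset_def)

lemma closure_of_l_coset:
  assumes "topological_group G T" and "g \<in> carrier G" and "S \<subseteq> carrier G"
  shows "T closure_of (g <#\<^bsub>G\<^esub> S) = g <#\<^bsub>G\<^esub> (T closure_of S)"
  using homeomorphic_map_closure_of[OF homeomorphic_map_left_translation[OF assms(1,2)]] assms
  by (simp add: l_coset_eq_image topspace_topological_group)

lemma interior_of_l_coset:
  assumes "topological_group G T" and "g \<in> carrier G" and "S \<subseteq> carrier G"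
  shows "T interior_of (g <#\<^bsub>G\<^esub> S) = g <#\<^bsub>G\<^esub> (T interior_of S)"
  using homeomorphic_map_interior_of[OF homeomorphic_map_left_translation[OF assms(1,2)]] assms
  by (simp add: l_coset_eq_image topspace_topological_group)

lemma l_coset_interior_of_closure_of_subgroup:
  assumes tg: "topological_group G T" and H: "subgroup H G" and h: "h \<in> H"
  shows "h <#\<^bsub>G\<^esub> (T interior_of (T closure_of H)) = T interior_of (T closure_of H)"
proof -
  interpret group G using topological_group_group[OF tg] .
  have hc: "h \<in> carrier G" and Hc: "H \<subseteq> carrier G"
    using h subgroup.subset[OF H] by auto
  have Cc: "T closure_of H \<subseteq> carrier G" using closure_of_subset_carrier[OF tg] .
  have "h <#\<^bsub>G\<^esub> (T interior_of (T closure_of H)) = T interior_of (T closure_of (h <#\<^bsub>G\<^esub> H))"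
    by (simp add: interior_of_l_coset[OF tg hc Cc] closure_of_l_coset[OF tg hc Hc])
  also have "\<dots> = T interior_of (T closure_of H)"
    by (simp add: coset_join3[OF hc H h])
  finally show ?thesis .
qed

lemma interior_of_closure_of_subgroup_eq_empty:
  assumes tg: "topological_group G T" and conn: "connected_space T"
    and H: "subgroup H G" and not_dense: "\<not> dense_in T H"
  shows "T interior_of (T closure_of H) = {}"
proof (rule ccontr)
  assume "T interior_of (T closure_of H) \<noteq> {}"
  interpret group G using topological_group_group[OF tg] .
  define I where "I = T interior_of (T closure_of H)"
  have ts: "topspace T = carrier G" using topspace_topological_group[OF tg] .
  have invariant: "h <#\<^bsub>G\<^esub> I = I" if "h \<in> H" for h
    using l_coset_interior_of_closure_of_subgroup[OF tg H that] by (simp add: I_def)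
  have Hc: "H \<subseteq> carrier G" using subgroup.subset[OF H] .
  obtain u where u: "u \<in> I" using \<open>T interior_of (T closure_of H) \<noteq> {}\<close> by (auto simp: I_def)
  have "u \<in> T closure_of H" "openin T I"
    using u interior_of_subset[of T "T closure_of H"] by (auto simp: I_def)
  then obtain h0 where h0: "h0 \<in> H" "h0 \<in> I"
    using u by (auto simp: in_closure_of)
  have "\<one>\<^bsub>G\<^esub> = inv\<^bsub>G\<^esub> h0 \<otimes>\<^bsub>G\<^esub> h0" using h0 Hc by auto
  also have "\<dots> \<in> inv\<^bsub>G\<^esub> h0 <#\<^bsub>G\<^esub> I" using h0 by (auto simp: l_coset_def)
  finally have one_I: "\<one>\<^bsub>G\<^esub> \<in> I"
    using invariant[OF subgroup.m_inv_closed[OF H h0(1)]] by simp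
  have closure_sub: "T closure_of H \<subseteq> I"
  proof
    fix x assume x: "x \<in> T closure_of H"
    then have xc: "x \<in> carrier G" using closure_of_subset_carrier[OF tg] by blast
    \<comment> \<open>The open neighbourhood \<open>x I\<^sup>-\<^sup>1\<close> of \<open>x\<close> meets \<open>H\<close>.\<close>
    define N where "N = {y \<in> topspace T. inv\<^bsub>G\<^esub> y \<otimes>\<^bsub>G\<^esub> x \<in> I}"
    have "continuous_map T T (\<lambda>y. inv\<^bsub>G\<^esub> y \<otimes>\<^bsub>G\<^esub> x)"
      using continuous_map_topological_group_inv[OF tg continuous_map_id] xc ts
      by (intro continuous_map_topological_group_mult[OF tg]) (simp_all add: id_def)
    then have "openin T N"
      unfolding N_def I_def by (rule openin_continuous_map_preimage) simp
    moreover have "x \<in> N" using xc one_I by (simp add: N_def ts)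
    ultimately obtain h where "h \<in> H" "h \<in> N"
      using x unfolding in_closure_of by blast
    then have h: "h \<in> H" "inv\<^bsub>G\<^esub> h \<otimes>\<^bsub>G\<^esub> x \<in> I" by (auto simp: N_def)
    have "x = h \<otimes>\<^bsub>G\<^esub> (inv\<^bsub>G\<^esub> h \<otimes>\<^bsub>G\<^esub> x)"
      using h(1) Hc xc by (simp add: subsetD m_assoc[symmetric])
    also have "\<dots> \<in> h <#\<^bsub>G\<^esub> I" using h(2) by (auto simp: l_coset_def)
    finally show "x \<in> I" using invariant[OF h(1)] by simp
  qed
  have I_eq: "I = T closure_of H"
    using closure_sub interior_of_subset[of T "T closure_of H"] by (simp add: I_def)
  have "closedin T I" and "openin T I"
    by (subst I_eq, simp) (simp add: I_def)
  then have "I = topspace T"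
    using conn one_I ts unfolding connected_space_clopen_in by blast
  then have "T closure_of H = topspace T"
    using I_eq by simp
  then show False
    using not_dense Hc ts by (simp add: dense_in_def)
qed

lemma interior_of_closure_of_l_coset_eq_empty:
  assumes tg: "topological_group G T" and "connected_space T"
    and H: "subgroup H G" and "\<not> dense_in T H" and a: "a \<in> carrier G"
  shows "T interior_of (T closure_of (a <#\<^bsub>G\<^esub> H)) = {}"
proof -
  have Hc: "H \<subseteq> carrier G" using subgroup.subset[OF H] .
  have Cc: "T closure_of H \<subseteq> carrier G" using closure_of_subset_carrier[OF tg] .
  have "T interior_of (T closure_of (a <#\<^bsub>G\<^esub> H)) = a <#\<^bsub>G\<^esub> (T interior_of (T closure_of H))"
    by (simp only: closure_of_l_coset[OF tg a Hc] interior_of_l_coset[OF tg a Cc])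
  then show ?thesis
    by (simp add: interior_of_closure_of_subgroup_eq_empty[OF assms(1-4)] l_coset_def)
qed

lemma interior_of_closedin_Un_eq_empty:
  assumes "closedin X S" and "X interior_of S = {}" and "X interior_of S' = {}"
  shows "X interior_of (S \<union> S') = {}"
proof -
  have "U = {}" if U: "openin X U" "U \<subseteq> S \<union> S'" for U
  proof -
    have "U - S = {}"
      using assms(1,3) U by (auto simp: interior_of_eq_empty intro!: openin_diff)
    then show ?thesis using assms(2) U by (auto simp: interior_of_eq_empty)
  qed
  then show ?thesis by (simp add: interior_of_eq_empty)
qed

lemma interior_of_Union_closedin_eq_empty:
  assumes "finite \<F>" and "\<And>S. S \<in> \<F> \<Longrightarrow> closedin X S \<and> X interior_of S = {}"
  shows "X interior_of (\<Union>\<F>) = {}"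
  using assms
proof (induction \<F> rule: finite_induct)
  case (insert S \<F>)
  then show ?case by (simp add: interior_of_closedin_Un_eq_empty)
qed simp

lemma dense_in_diff_nowhere_dense:
  assumes dense: "dense_in T D" and nowhere_dense: "T interior_of (T closure_of S) = {}"
  shows "dense_in T (D - S)"
proof -
  have "(D - S) \<inter> U \<noteq> {}" if U: "openin T U" "U \<noteq> {}" for U
  proof -
    have "openin T (U - T closure_of S)" and "U - T closure_of S \<noteq> {}"
      using U nowhere_dense by (auto simp: interior_of_eq_empty_alt)
    then obtain x where "x \<in> D" "x \<in> U" "x \<notin> T closure_of S"
      using dense by (auto simp: dense_in_def dense_intersects_open)
    then show ?thesis
      using closure_of_subset_Int[of T S] openin_subset[OF U(1)] by blast
  qed
  then show ?thesis
    using dense by (auto simp: dense_in_def dense_intersects_open)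
qed

text \<open>Of the hypotheses on \<open>\<Gamma>\<close>, only its density matters.\<close>

theorem lemma5p2:
  fixes G :: "('a, 'b) monoid_scheme" and T :: "'a topology"
    and \<Gamma> :: "'a set" and n :: nat and H :: "nat \<Rightarrow> 'a set" and a :: "nat \<Rightarrow> 'a"
  assumes "topological_group G T"
    and "connected_space T"
    and "subgroup \<Gamma> G"
    and "dense_in T \<Gamma>"
    and "\<And>i. i < n \<Longrightarrow> subgroup (H i) G \<and> H i \<subseteq> \<Gamma>"
    and "\<And>i. i < n \<Longrightarrow> \<not> dense_in T (H i)"
    and "\<And>i. i < n \<Longrightarrow> a i \<in> \<Gamma>"
  shows "dense_in T (\<Gamma> - (\<Union>i<n. a i <#\<^bsub>G\<^esub> H i))"
proof (rule dense_in_diff_nowhere_dense[OF assms(4)])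
  have a: "a i \<in> carrier G" if "i < n" for i
    using assms(3,7) that subgroup.subset by blast
  have "T interior_of (\<Union>i<n. T closure_of (a i <#\<^bsub>G\<^esub> H i)) = {}"
    using interior_of_closure_of_l_coset_eq_empty[OF assms(1,2)] assms(5,6) a
    by (intro interior_of_Union_closedin_eq_empty) auto
  then show "T interior_of (T closure_of (\<Union>i<n. a i <#\<^bsub>G\<^esub> H i)) = {}"
    by (simp add: closure_of_Union)
qed

end
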